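(* Let $\sigma\subseteq E_0$ be a reasonable strategy of player $0$ in the escape arena $\mathcal{A}_\bot$. Define $\mathcal{V}_\bot:V\cup\{\bot\}\to\mathcal{P}$ by $\mathcal{V}_\bot(\bot)=\text{\o}$ and $\mathcal{V}_\bot(s)=\infty$ for $s\in V$, and the operator $F_\sigma$ on maps $\mathcal{V}:V\cup\{\bot\}\to\mathcal{P}$ by $F_\sigma[\mathcal{V}](\bot)=\text{\o}$, $F_\sigma[\mathcal{V}](s)=\wp(s)+\min^{\preceq}\{\mathcal{V}(t)\mid (s,t)\in E_1\}$ if $s\in V_1$, and $F_\sigma[\mathcal{V}](s)=\wp(s)+\max^{\preceq}\{\mathcal{V}(t)\mid (s,t)\in\sigma\}$ if $s\in V_0$. Then the valuation $\mathcal{V}_\sigma$ is the limit of the sequence $F_\sigma^i[\mathcal{V}_\bot]$ as $i\to\infty$, and this limit is reached after at most $|V|$ iterations.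
   Context: Parity game arena: $\mathcal{A}=(V,E,o,c)$ with $V$ finite, $E\subseteq V\times V$, every vertex has a successor, owner map $o:V\to\{0,1\}$, colouring $c:V\to\{0,\dots,d-1\}$; $V_i=o^{-1}(i)$. An infinite vertex sequence is won by player $0$ iff the largest colour occurring infinitely often is even. A cycle is $i$-dominated if its largest colour has parity $i$. Escape arena $\mathcal{A}_\bot$: vertices $V\cup\{\bot\}$, edges $E\cup(V_0\times\{\bot\})$, $\bot$ owned by player $0$ with no outgoing edges. $E_0$ = edges of $\mathcal{A}_\bot$ leaving $V_0$, $E_1=E\cap(V_1\times V)$. A strategy of player $i$ is a set $\sigma\subseteq E_i$ with $s\sigma\neq\emptyset$ for all $s\in V_i$. $\mathcal{A}_\bot|_{\sigma,\tau}$ has edges $\sigma\cup\tau$, $\mathcal{A}_\bot|_\sigma$ has edges $\sigma\cup E_1$; plays are maximal paths (infinite or ending in $\bot$). Colour profiles $\mathcal{P}=\mathbb{Z}^d\cup\{-\infty,\infty\}$, $\text{\o}$ zero vector; $\wp(s)$ unit vector at coordinate $c(s)$; for a finite path the sum over vertices in $V$; infinite play: $\infty$ if won by player $0$, else $-\infty$. Addition componentwise, $x+\pm\infty=\pm\infty$. Order $\prec$: $-\infty$ least, $\infty$ greatest; for distinct $p,p'\in\mathbb{Z}^d$ with $k$ the largest differing index, $p\prec p'$ iff ($k$ even, $p_k<p'_k$) or ($k$ odd, $p_k>p'_k$). Valuation: $\mathcal{V}_\sigma(\bot)=\text{\o}$, $\mathcal{V}_\sigma(s)=\min^\prec_\tau\max^\prec\{\wp(\pi)\mid\pi$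 a play in $\mathcal{A}_\bot|_{\sigma,\tau}$ from $s\}$, min over player-$1$ strategies $\tau$. $\sigma$ is reasonable if $\mathcal{A}_\bot|_\sigma$ has no $1$-dominated cycle. *)

theory Defs
  imports Main "HOL-Library.Infinite_Set"
begin

text \<open>Vertices of the escape arena are \<open>'v option\<close>: \<open>Some v\<close> for \<open>v \<in> V\<close>, \<open>None\<close> for bottom.\<close>

text \<open>Colour profiles: \<open>-\<infinity>\<close>, integer vectors (finitely supported functions nat to int,
  coordinate k counts colour k), \<open>+\<infinity>\<close>.\<close>
datatype prof = NegInf | Fin "nat \<Rightarrow> int" | PosInf

definition pzero :: prof where "pzero = Fin (\<lambda>_. 0)"

definition punit :: "nat \<Rightarrow> prof" where
  "punit k = Fin (\<lambda>i. if i = k then 1 else 0)"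

fun padd :: "prof \<Rightarrow> prof \<Rightarrow> prof" where
  "padd _ PosInf = PosInf"
| "padd _ NegInf = NegInf"
| "padd (Fin a) (Fin b) = Fin (\<lambda>i. a i + b i)"
| "padd PosInf (Fin _) = PosInf"
| "padd NegInf (Fin _) = NegInf"

fun pless :: "prof \<Rightarrow> prof \<Rightarrow> bool" where
  "pless NegInf q = (q \<noteq> NegInf)"
| "pless PosInf q = False"
| "pless (Fin a) NegInf = False"
| "pless (Fin a) PosInf = True"
| "pless (Fin a) (Fin b) = (a \<noteq> b \<and>
     (let k = Max {i. a i \<noteq> b i} in
        (even k \<and> a k < b k) \<or> (odd k \<and> a k > b k)))"

definition pleq :: "prof \<Rightarrow> prof \<Rightarrow> bool" where
  "pleq p q = (p = q \<or> pless p q)"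

definition pmax :: "prof set \<Rightarrow> prof" where
  "pmax S = (THE m. m \<in> S \<and> (\<forall>x\<in>S. pleq x m))"

definition pmin :: "prof set \<Rightarrow> prof" where
  "pmin S = (THE m. m \<in> S \<and> (\<forall>x\<in>S. pleq m x))"

definition prof_path :: "('v \<Rightarrow> nat) \<Rightarrow> 'v option list \<Rightarrow> prof" where
  "prof_path c xs = Fin (\<lambda>k. int (length (filter
      (\<lambda>x. case x of Some v \<Rightarrow> c v = k | None \<Rightarrow> False) xs)))"

definition wins0 :: "('v \<Rightarrow> nat) \<Rightarrow> (nat \<Rightarrow> 'v option) \<Rightarrow> bool" where
  "wins0 c \<omega> = even (Max {k. \<exists>\<^sub>\<infinity> i. (case \<omega> i of Some v \<Rightarrow> c v = k | None \<Rightarrow> False)})"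

definition play_profs :: "('v \<Rightarrow> nat) \<Rightarrow> ('v option \<times> 'v option) set \<Rightarrow> 'v option \<Rightarrow> prof set" where
  "play_profs c G s =
     {prof_path c xs | xs. xs \<noteq> [] \<and> hd xs = s \<and>
        (\<forall>i. Suc i < length xs \<longrightarrow> (xs ! i, xs ! Suc i) \<in> G) \<and>
        (\<forall>y. (last xs, y) \<notin> G)}
   \<union> {if wins0 c \<omega> then PosInf else NegInf | \<omega>. \<omega> 0 = s \<and> (\<forall>i. (\<omega> i, \<omega> (Suc i)) \<in> G)}"

definition E0 :: "'v set \<Rightarrow> ('v \<times> 'v) set \<Rightarrow> ('v \<Rightarrow> nat) \<Rightarrow> ('v option \<times> 'v option) set" where
  "E0 V E own = {(Some a, Some b) | a b. (a, b) \<in> E \<and> a \<in> V \<and> own a = 0}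
              \<union> {(Some a, None) | a. a \<in> V \<and> own a = 0}"

definition E1 :: "'v set \<Rightarrow> ('v \<times> 'v) set \<Rightarrow> ('v \<Rightarrow> nat) \<Rightarrow> ('v option \<times> 'v option) set" where
  "E1 V E own = {(Some a, Some b) | a b. (a, b) \<in> E \<and> a \<in> V \<and> own a = 1}"

definition strategy0 :: "'v set \<Rightarrow> ('v \<times> 'v) set \<Rightarrow> ('v \<Rightarrow> nat) \<Rightarrow> ('v option \<times> 'v option) set \<Rightarrow> bool" where
  "strategy0 V E own \<sigma> = (\<sigma> \<subseteq> E0 V E own \<and> (\<forall>s\<in>V. own s = 0 \<longrightarrow> (\<exists>t. (Some s, t) \<in> \<sigma>)))"

definition strategy1 :: "'v set \<Rightarrow> ('v \<times> 'v) set \<Rightarrow> ('v \<Rightarrow> nat) \<Rightarrow> ('v option \<times> 'v option) set \<Rightarrow> bool" where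
  "strategy1 V E own \<tau> = (\<tau> \<subseteq> E1 V E own \<and> (\<forall>s\<in>V. own s = 1 \<longrightarrow> (\<exists>t. (Some s, t) \<in> \<tau>)))"

definition is_cycle :: "('v option \<times> 'v option) set \<Rightarrow> 'v list \<Rightarrow> bool" where
  "is_cycle G ws = (ws \<noteq> [] \<and>
     (\<forall>i < length ws. (Some (ws ! i), Some (ws ! ((i + 1) mod length ws))) \<in> G))"

definition reasonable :: "'v set \<Rightarrow> ('v \<times> 'v) set \<Rightarrow> ('v \<Rightarrow> nat) \<Rightarrow> ('v \<Rightarrow> nat)
    \<Rightarrow> ('v option \<times> 'v option) set \<Rightarrow> bool" where
  "reasonable V E own c \<sigma> =
     (\<not> (\<exists>ws. is_cycle (\<sigma> \<union> E1 V E own) ws \<and> odd (Max (c ` set ws))))"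

definition valuation :: "'v set \<Rightarrow> ('v \<times> 'v) set \<Rightarrow> ('v \<Rightarrow> nat) \<Rightarrow> ('v \<Rightarrow> nat)
    \<Rightarrow> ('v option \<times> 'v option) set \<Rightarrow> 'v option \<Rightarrow> prof" where
  "valuation V E own c \<sigma> x = (case x of None \<Rightarrow> pzero
     | Some s \<Rightarrow> pmin {pmax (play_profs c (\<sigma> \<union> \<tau>) (Some s)) | \<tau>. strategy1 V E own \<tau>})"

definition Vbot :: "'v option \<Rightarrow> prof" where
  "Vbot x = (case x of None \<Rightarrow> pzero | Some _ \<Rightarrow> PosInf)"

definition Fop :: "('v \<times> 'v) set \<Rightarrow> ('v \<Rightarrow> nat) \<Rightarrow> ('v \<Rightarrow> nat)
    \<Rightarrow> ('v option \<times> 'v option) set \<Rightarrow> ('v option \<Rightarrow> prof) \<Rightarrow> 'v option \<Rightarrow> prof" where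
  "Fop E own c \<sigma> W x = (case x of None \<Rightarrow> pzero
     | Some s \<Rightarrow> (if own s = 1
         then padd (punit (c s)) (pmin {W (Some t) | t. (s, t) \<in> E})
         else padd (punit (c s)) (pmax {W t | t. (Some s, t) \<in> \<sigma>})))"

end

theory Submission
  imports Defs
begin

text \<open>The iterates \<open>F\<^sub>\<sigma>\<^sup>i[\<V>\<^sub>\<bottom>]\<close> decrease pointwise.
  \<open>F\<^sub>\<sigma>\<^sup>i[\<V>\<^sub>\<bottom>] \<preceq> \<V>\<^sub>\<sigma>\<close> for \<open>i \<ge> |V|\<close>: by induction on \<open>i\<close>, from every vertex and against
  every \<open>\<tau>\<close>, either some maximal finite play has profile \<open>\<succeq> F\<^sub>\<sigma>\<^sup>i[\<V>\<^sub>\<bottom>]\<close>, or there is a walk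
  through \<open>i + 1\<close> vertices of \<open>V\<close>; for \<open>i \<ge> |V|\<close> the latter closes a cycle and so yields an
  infinite play, which player 0 wins because \<open>\<sigma>\<close> is reasonable.
  \<open>\<V>\<^sub>\<sigma> \<preceq> F\<^sub>\<sigma>\<^sup>j\<^sup>+\<^sup>1[\<V>\<^sub>\<bottom>]\<close>: let \<open>\<tau>\<close> choose at each player-1 vertex a successor minimising
  \<open>F\<^sub>\<sigma>\<^sup>j[\<V>\<^sub>\<bottom>]\<close>. Then \<open>W = F\<^sub>\<sigma>\<^sup>j\<^sup>+\<^sup>1[\<V>\<^sub>\<bottom>]\<close> satisfies \<open>W(s) \<succeq> \<wp>(s) + W(t)\<close> along every
  edge of \<open>\<sigma> \<union> \<tau>\<close>. Summing along a finite play bounds its profile by \<open>W\<close>, while summing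
  around a cycle, whose profile is positive by reasonableness, is impossible unless \<open>W = \<infinity>\<close>.\<close>

section \<open>Order on colour profiles\<close>

text \<open>The profiles that occur as values: \<open>\<infinity>\<close> and finitely supported vectors. On these \<open>\<prec>\<close> is
  a total order (for vectors differing at infinitely many colours the \<open>Max\<close> in \<open>pless\<close> is
  meaningless), and \<open>-\<infinity>\<close> never occurs since all infinite plays are won by player 0.\<close>

fun proper_prof :: "prof \<Rightarrow> bool" where
  "proper_prof NegInf = False"
| "proper_prof PosInf = True"
| "proper_prof (Fin a) = finite {i. a i \<noteq> 0}"

lemma finite_neq_if_finite_support:
  "finite {i. a i \<noteq> (0::int)} \<Longrightarrow> finite {i. b i \<noteq> 0} \<Longrightarrow> finite {i. a i \<noteq> b i}"
  by (rule finite_subset[of _ "{i. a i \<noteq> 0} \<union> {i. b i \<noteq> 0}"]) auto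

lemma pless_Fin_iff:
  assumes "finite {i. a i \<noteq> b i}"
  shows "pless (Fin a) (Fin b) \<longleftrightarrow>
    (\<exists>k. (\<forall>i>k. a i = b i) \<and> (even k \<and> a k < b k \<or> odd k \<and> b k < a k))"
proof
  assume "pless (Fin a) (Fin b)"
  moreover have "\<forall>i>Max {i. a i \<noteq> b i}. a i = b i"
    using Max_ge[OF assms] by (meson leD mem_Collect_eq)
  ultimately show "\<exists>k. (\<forall>i>k. a i = b i) \<and> (even k \<and> a k < b k \<or> odd k \<and> b k < a k)"
    unfolding pless.simps Let_def by blast
next
  assume "\<exists>k. (\<forall>i>k. a i = b i) \<and> (even k \<and> a k < b k \<or> odd k \<and> b k < a k)"
  then obtain k where "\<forall>i>k. a i = b i" and at: "even k \<and> a k < b k \<or> odd k \<and> b k < a k"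
    by blast
  then have "Max {i. a i \<noteq> b i} = k"
    by (intro Max_eqI[OF assms]) (auto simp: not_less[symmetric])
  with at show "pless (Fin a) (Fin b)"
    by (auto simp: Let_def)
qed

lemma pless_asym: "pless x y \<Longrightarrow> \<not> pless y x"
proof (cases x; cases y)
  fix a b assume "x = Fin a" "y = Fin b" "pless x y"
  moreover have "{i. b i \<noteq> a i} = {i. a i \<noteq> b i}" by auto
  ultimately show "\<not> pless y x" by (auto simp: Let_def)
qed auto

lemma pleq_antisym: "pleq x y \<Longrightarrow> pleq y x \<Longrightarrow> x = y"
  unfolding pleq_def using pless_asym by blast

lemma pleq_refl [simp]: "pleq x x"
  by (simp add: pleq_def)

lemma pleq_PosInf [simp]: "pleq x PosInf"
  by (cases x) (auto simp: pleq_def)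

lemma PosInf_pleq_iff [simp]: "pleq PosInf x \<longleftrightarrow> x = PosInf"
  by (auto simp: pleq_def)

lemma pless_trans:
  assumes "proper_prof x" "proper_prof y" "proper_prof z" "pless x y" "pless y z"
  shows "pless x z"
proof (cases x; cases y; cases z)
  fix a b d assume xyz: "x = Fin a" "y = Fin b" "z = Fin d"
  have fin: "finite {i. a i \<noteq> b i}" "finite {i. b i \<noteq> d i}" "finite {i. a i \<noteq> d i}"
    using assms(1-3) xyz by (auto intro: finite_neq_if_finite_support)
  obtain k where k: "\<forall>i>k. a i = b i" "even k \<and> a k < b k \<or> odd k \<and> b k < a k"
    using assms(4) xyz pless_Fin_iff[OF fin(1)] by auto
  obtain l where l: "\<forall>i>l. b i = d i" "even l \<and> b l < d l \<or> odd l \<and> d l < b l"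
    using assms(5) xyz pless_Fin_iff[OF fin(2)] by auto
  have "\<forall>i>max k l. a i = d i"
    using k(1) l(1) by simp
  moreover have "even (max k l) \<and> a (max k l) < d (max k l) \<or> odd (max k l) \<and> d (max k l) < a (max k l)"
    using k l by (cases k l rule: linorder_cases) auto
  ultimately show ?thesis
    using pless_Fin_iff[OF fin(3)] xyz by blast
qed (use assms in auto)

lemma pleq_trans:
  "proper_prof x \<Longrightarrow> proper_prof y \<Longrightarrow> proper_prof z \<Longrightarrow> pleq x y \<Longrightarrow> pleq y z \<Longrightarrow> pleq x z"
  unfolding pleq_def using pless_trans by blast

lemma pleq_total: "proper_prof x \<Longrightarrow> proper_prof y \<Longrightarrow> pleq x y \<or> pleq y x"
proof (cases x; cases y)
  fix a b assume xy: "x = Fin a" "y = Fin b" "proper_prof x" "proper_prof y"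
  show "pleq x y \<or> pleq y x"
  proof (cases "a = b")
    case False
    have fin: "finite {i. a i \<noteq> b i}"
      using xy by (auto intro: finite_neq_if_finite_support)
    have "a (Max {i. a i \<noteq> b i}) \<noteq> b (Max {i. a i \<noteq> b i})"
      using Max_in[OF fin] False by (auto simp: fun_eq_iff)
    moreover have "{i. b i \<noteq> a i} = {i. a i \<noteq> b i}" by auto
    ultimately show ?thesis
      using xy by (auto simp: pleq_def Let_def)
  qed (simp add: xy)
qed (auto simp: pleq_def)

lemma pleq_padd_Fin_iff [simp]: "pleq (padd (Fin u) x) (padd (Fin u) y) \<longleftrightarrow> pleq x y"
  by (cases x; cases y) (auto simp: pleq_def Let_def fun_eq_iff)

lemma proper_padd: "proper_prof x \<Longrightarrow> proper_prof y \<Longrightarrow> proper_prof (padd x y)"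
proof (cases x; cases y)
  fix a b assume "x = Fin a" "y = Fin b" "proper_prof x" "proper_prof y"
  then have "finite ({i. a i \<noteq> 0} \<union> {i. b i \<noteq> 0})" by simp
  then have "finite {i. a i + b i \<noteq> 0}" by (rule finite_subset[rotated]) auto
  with \<open>x = Fin a\<close> \<open>y = Fin b\<close> show ?thesis by simp
qed simp_all

lemma finite_has_greatest_wrt:
  assumes "finite S" "S \<noteq> {}"
    and "\<And>x y. x \<in> S \<Longrightarrow> y \<in> S \<Longrightarrow> R x y \<or> R y x"
    and "\<And>x y z. x \<in> S \<Longrightarrow> y \<in> S \<Longrightarrow> z \<in> S \<Longrightarrow> R x y \<Longrightarrow> R y z \<Longrightarrow> R x z"
  shows "\<exists>m\<in>S. \<forall>x\<in>S. R x m"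
  using assms
proof (induction S rule: finite_ne_induct)
  case (insert x F)
  then obtain m where "m \<in> F" "\<forall>y\<in>F. R y m" by blast
  with insert.prems show ?case by (metis insert_iff)
qed blast

lemma pmax_greatest:
  assumes "finite S" "S \<noteq> {}" "\<forall>x\<in>S. proper_prof x"
  shows "pmax S \<in> S \<and> (\<forall>x\<in>S. pleq x (pmax S))"
proof -
  obtain m where m: "m \<in> S" "\<forall>x\<in>S. pleq x m"
    using finite_has_greatest_wrt[OF assms(1,2), of pleq] assms(3) pleq_total pleq_trans by metis
  have "pmax S = m"
    unfolding pmax_def by (rule the_equality) (use m pleq_antisym in auto)
  with m show ?thesis by simp
qed

lemma pmin_least:
  assumes "finite S" "S \<noteq> {}" "\<forall>x\<in>S. proper_prof x"
  shows "pmin S \<in> S \<and> (\<forall>x\<in>S. pleq (pmin S) x)"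
proof -
  obtain m where m: "m \<in> S" "\<forall>x\<in>S. pleq m x"
    using finite_has_greatest_wrt[OF assms(1,2), of "\<lambda>x y. pleq y x"] assms(3) pleq_total pleq_trans
    by metis
  have "pmin S = m"
    unfolding pmin_def by (rule the_equality) (use m pleq_antisym in auto)
  with m show ?thesis by simp
qed

lemma proper_pmax: "finite S \<Longrightarrow> S \<noteq> {} \<Longrightarrow> \<forall>x\<in>S. proper_prof x \<Longrightarrow> proper_prof (pmax S)"
  using pmax_greatest by blast

lemma proper_pmin: "finite S \<Longrightarrow> S \<noteq> {} \<Longrightarrow> \<forall>x\<in>S. proper_prof x \<Longrightarrow> proper_prof (pmin S)"
  using pmin_least by blast

lemma pmax_eq_PosInf: "PosInf \<in> S \<Longrightarrow> pmax S = PosInf"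
  unfolding pmax_def by (rule the_equality) auto

lemma pmin_mono:
  assumes "finite T" "T \<noteq> {}" "\<forall>t\<in>T. proper_prof (f t) \<and> proper_prof (g t) \<and> pleq (f t) (g t)"
  shows "pleq (pmin (f ` T)) (pmin (g ` T))"
proof -
  obtain t where t: "t \<in> T" "pmin (g ` T) = g t"
    using pmin_least[of "g ` T"] assms by auto
  moreover have "pleq (pmin (f ` T)) (f t)" "proper_prof (pmin (f ` T))"
    using pmin_least[of "f ` T"] assms t by auto
  ultimately show ?thesis
    using assms(3) pleq_trans by metis
qed

lemma pmax_mono:
  assumes "finite T" "T \<noteq> {}" "\<forall>t\<in>T. proper_prof (f t) \<and> proper_prof (g t) \<and> pleq (f t) (g t)"
  shows "pleq (pmax (f ` T)) (pmax (g ` T))"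
proof -
  obtain t where t: "t \<in> T" "pmax (f ` T) = f t"
    using pmax_greatest[of "f ` T"] assms by auto
  moreover have "pleq (g t) (pmax (g ` T))" "proper_prof (pmax (g ` T))"
    using pmax_greatest[of "g ` T"] assms t by auto
  ultimately show ?thesis
    using assms(3) pleq_trans by metis
qed

lemma prof_path_Nil [simp]: "prof_path c [] = pzero"
  by (simp add: prof_path_def pzero_def)

lemma prof_path_Cons_Some [simp]:
  "prof_path c (Some v # xs) = padd (punit (c v)) (prof_path c xs)"
  by (auto simp: prof_path_def punit_def)

lemma prof_path_Cons_None [simp]: "prof_path c (None # xs) = prof_path c xs"
  by (simp add: prof_path_def)

lemma prof_path_snoc_None [simp]: "prof_path c (xs @ [None]) = prof_path c xs"
  by (simp add: prof_path_def)

lemma proper_padd_punit: "proper_prof x \<Longrightarrow> proper_prof (padd (punit k) x)"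
  by (rule proper_padd) (simp_all add: punit_def)

lemma proper_prof_path: "proper_prof (prof_path c xs)"
proof (induction xs)
  case (Cons x xs)
  then show ?case by (cases x) (simp_all add: proper_padd_punit)
qed (simp add: pzero_def)

lemma pleq_padd_punit_iff [simp]: "pleq (padd (punit k) x) (padd (punit k) y) \<longleftrightarrow> pleq x y"
  by (simp add: punit_def)

lemma padd_pzero [simp]: "padd pzero y = y"
  by (cases y) (simp_all add: pzero_def)

lemma padd_prof_path_Cons_Some:
  "padd (prof_path c (Some v # xs)) y = padd (punit (c v)) (padd (prof_path c xs) y)"
proof -
  obtain f where "prof_path c xs = Fin f"
    by (simp add: prof_path_def)
  then show ?thesis
    by (cases y) (simp_all add: punit_def add.assoc)
qed

lemma prof_path_map_Some:
  "prof_path c (map Some ws) = Fin (\<lambda>k. int (length (filter (\<lambda>v. c v = k) ws)))"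
  by (induction ws) (auto simp: pzero_def punit_def)

lemma padd_prof_path_pzero [simp]: "padd (prof_path c xs) pzero = prof_path c xs"
  by (simp add: prof_path_def pzero_def)

lemma pzero_pless_even_cycle:
  assumes "ws \<noteq> []" "even (Max (c ` set ws))"
  shows "pless pzero (prof_path c (map Some ws))"
proof -
  define f where "f k = int (length (filter (\<lambda>v. c v = k) ws))" for k
  have support: "{k. f k \<noteq> 0} = c ` set ws"
    by (auto simp: f_def filter_empty_conv)
  have "Max (c ` set ws) \<in> c ` set ws"
    using assms(1) by simp
  then have "0 < f (Max (c ` set ws))"
    by (auto simp: f_def filter_empty_conv)
  with assms(2) show ?thesis
    unfolding prof_path_map_Some f_def[symmetric] pzero_def
    by (auto simp: support Let_def)
qed

lemma not_pleq_padd_positive: "pless pzero (Fin p) \<Longrightarrow> \<not> pleq (padd (Fin p) (Fin b)) (Fin b)"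
proof
  assume pos: "pless pzero (Fin p)" and "pleq (padd (Fin p) (Fin b)) (Fin b)"
  then have "pleq (padd (Fin (\<lambda>i. - b i)) (padd (Fin p) (Fin b))) (padd (Fin (\<lambda>i. - b i)) (Fin b))"
    by (simp only: pleq_padd_Fin_iff)
  moreover have "padd (Fin (\<lambda>i. - b i)) (padd (Fin p) (Fin b)) = Fin p"
    "padd (Fin (\<lambda>i. - b i)) (Fin b) = pzero"
    by (simp_all add: pzero_def)
  ultimately have "pleq (Fin p) pzero"
    by simp
  with pos show False
    unfolding pleq_def by (metis pless_asym)
qed

section \<open>Walks, lassos and recurrence\<close>

definition walk :: "('a \<times> 'a) set \<Rightarrow> 'a list \<Rightarrow> bool" where
  "walk G xs \<longleftrightarrow> xs \<noteq> [] \<and> (\<forall>i. Suc i < length xs \<longrightarrow> (xs ! i, xs ! Suc i) \<in> G)"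

definition infpath :: "('a \<times> 'a) set \<Rightarrow> (nat \<Rightarrow> 'a) \<Rightarrow> bool" where
  "infpath G \<omega> \<longleftrightarrow> (\<forall>i. (\<omega> i, \<omega> (Suc i)) \<in> G)"

lemma play_profs_eq:
  "play_profs c G s =
     {prof_path c xs | xs. walk G xs \<and> hd xs = s \<and> (\<forall>y. (last xs, y) \<notin> G)}
   \<union> {if wins0 c \<omega> then PosInf else NegInf | \<omega>. \<omega> 0 = s \<and> infpath G \<omega>}"
  unfolding play_profs_def walk_def infpath_def by blast

lemma not_walk_Nil [simp]: "\<not> walk G []"
  by (simp add: walk_def)

lemma walk_singleton [simp]: "walk G [x]"
  by (simp add: walk_def)

lemma walk_Cons_Cons [simp]: "walk G (x # y # xs) \<longleftrightarrow> (x, y) \<in> G \<and> walk G (y # xs)"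
  unfolding walk_def by (auto simp: nth_Cons split: nat.splits)

lemma walk_Cons: "walk G xs \<Longrightarrow> (x, hd xs) \<in> G \<Longrightarrow> walk G (x # xs)"
  by (cases xs) auto

lemma walk_snoc: "walk G xs \<Longrightarrow> (last xs, y) \<in> G \<Longrightarrow> walk G (xs @ [y])"
  by (induction xs rule: induct_list012) auto

lemma walk_map_upt: "infpath G \<omega> \<Longrightarrow> a < b \<Longrightarrow> walk G (map \<omega> [a..<b])"
  unfolding walk_def infpath_def by auto

lemma map_upt_Suc_ends:
  assumes "a \<le> b"
  shows "hd (map \<omega> [a..<Suc b]) = \<omega> a" "last (map \<omega> [a..<Suc b]) = \<omega> b"
    "butlast (map \<omega> [a..<Suc b]) = map \<omega> [a..<b]"
  using assms by (simp_all add: hd_map del: upt_Suc) (simp_all add: upt_Suc)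

lemma walk_repeat_infpath:
  assumes "walk G xs" "j < k" "k < length xs" "xs ! j = xs ! k"
  shows "\<exists>\<omega>. \<omega> 0 = hd xs \<and> infpath G \<omega>"
proof -
  \<comment> \<open>\<open>f\<close> runs through the prefix up to \<open>j\<close> and then around the loop \<open>j, \<dots>, k - 1\<close> forever.\<close>
  define f where "f i = (if i < j then i else j + (i - j) mod (k - j))" for i
  have f_less: "f i < k" for i
  proof -
    have "(i - j) mod (k - j) < k - j"
      using assms(2) by (intro mod_less_divisor) simp
    then have "j + (i - j) mod (k - j) < k"
      using assms(2) by linarith
    with assms(2) show ?thesis
      by (simp add: f_def)
  qed
  have f_Suc: "f (Suc i) = (if Suc (f i) = k then j else Suc (f i))" for i
    using assms(2) by (auto simp: f_def mod_Suc Suc_diff_le)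
  have "infpath G (\<lambda>i. xs ! f i)"
    unfolding infpath_def
  proof
    fix i
    have "(xs ! f i, xs ! Suc (f i)) \<in> G"
      using assms(1,3) f_less[of i] unfolding walk_def by auto
    then show "(xs ! f i, xs ! f (Suc i)) \<in> G"
      using f_Suc[of i] assms(4) by auto
  qed
  moreover have "xs ! f 0 = hd xs"
    using assms(1) by (simp add: f_def hd_conv_nth walk_def)
  ultimately show ?thesis
    by (intro exI[of _ "\<lambda>i. xs ! f i"]) simp
qed

lemma repeat_in_long_list:
  assumes "finite A" "set xs \<subseteq> A" "card A < length xs"
  shows "\<exists>j k. j < k \<and> k < length xs \<and> xs ! j = xs ! k"
proof -
  have "card (set xs) \<le> card A"
    using assms(1,2) by (rule card_mono)
  then have "\<not> distinct xs"
    using assms(3) distinct_card by fastforce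
  then obtain i j where "i < length xs" "j < length xs" "i \<noteq> j" "xs ! i = xs ! j"
    by (auto simp: distinct_conv_nth)
  then show ?thesis
    by (metis linorder_neqE_nat)
qed

lemma long_walk_infpath:
  assumes "walk G xs" "finite A" "set xs \<subseteq> A" "card A < length xs"
  shows "\<exists>\<omega>. \<omega> 0 = hd xs \<and> infpath G \<omega>"
proof -
  obtain j k where "j < k" "k < length xs" "xs ! j = xs ! k"
    using repeat_in_long_list[OF assms(2-4)] by blast
  then show ?thesis
    by (rule walk_repeat_infpath[OF assms(1)])
qed

lemma infinite_sequence_repeats:
  fixes \<nu> :: "nat \<Rightarrow> 'a"
  assumes "finite A" "\<forall>i. \<nu> i \<in> A"
  shows "\<exists>j k. j < k \<and> \<nu> j = \<nu> k"
proof -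
  have "range \<nu> \<subseteq> A"
    using assms(2) by auto
  then have "finite (range \<nu>)"
    using assms(1) by (rule finite_subset)
  have "\<not> inj \<nu>"
  proof
    assume "inj \<nu>"
    with \<open>finite (range \<nu>)\<close> show False
      using finite_imageD infinite_UNIV_nat by blast
  qed
  then obtain i j where "\<nu> i = \<nu> j" "i \<noteq> j"
    unfolding inj_on_def by blast
  then show ?thesis
    by (metis linorder_neqE_nat)
qed

lemma maximal_walk_exists:
  assumes "finite {xs. walk G xs \<and> hd xs = x}"
  shows "\<exists>xs. walk G xs \<and> hd xs = x \<and> (\<forall>y. (last xs, y) \<notin> G)"
proof -
  let ?W = "{xs. walk G xs \<and> hd xs = x}"
  obtain xs where xs: "xs \<in> ?W" "\<forall>ys\<in>?W. length ys \<le> length xs"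
    using ex_has_greatest_nat[of "\<lambda>xs. xs \<in> ?W" "[x]" length "Suc (Max (length ` ?W))"] assms
    by (auto simp: le_imp_less_Suc)
  have "(last xs, y) \<notin> G" for y
  proof
    assume "(last xs, y) \<in> G"
    with xs(1) have "walk G (xs @ [y])"
      by (simp add: walk_snoc)
    moreover have "hd (xs @ [y]) = x"
      using xs(1) by (cases xs) auto
    ultimately have "xs @ [y] \<in> ?W"
      by simp
    with xs(2) show False by fastforce
  qed
  with xs(1) show ?thesis by blast
qed

lemma segment_is_cycle:
  assumes "\<forall>i. (Some (\<nu> i), Some (\<nu> (Suc i))) \<in> G" "j < k" "\<nu> j = \<nu> k"
  shows "is_cycle G (map \<nu> [j..<k])"
  unfolding is_cycle_def
proof (intro conjI allI impI)
  show "map \<nu> [j..<k] \<noteq> []"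
    using assms(2) by simp
next
  fix i assume "i < length (map \<nu> [j..<k])"
  then have i: "i < k - j" by simp
  have "map \<nu> [j..<k] ! ((i + 1) mod (k - j)) = \<nu> (Suc (j + i))"
  proof (cases "i + 1 < k - j")
    case False
    with i have "i + 1 = k - j" by linarith
    moreover from this assms(2) have "Suc (j + i) = k" by linarith
    ultimately show ?thesis
      using assms(2,3) by simp
  qed simp
  with i assms(1) show "(Some (map \<nu> [j..<k] ! i), Some (map \<nu> [j..<k] ! ((i + 1) mod length (map \<nu> [j..<k])))) \<in> G"
    by simp
qed

lemma eventually_recurrent:
  fixes \<nu> :: "nat \<Rightarrow> 'a"
  assumes "finite A" "\<forall>i. \<nu> i \<in> A"
  shows "\<exists>N. \<forall>n\<ge>N. \<exists>\<^sub>\<infinity>i. \<nu> i = \<nu> n"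
proof -
  have "{n. \<not> (\<exists>\<^sub>\<infinity>i. \<nu> i = \<nu> n)} = (\<Union>v\<in>{v\<in>A. \<not> (\<exists>\<^sub>\<infinity>i. \<nu> i = v)}. {n. \<nu> n = v})"
    using assms(2) by auto
  then have "finite {n. \<not> (\<exists>\<^sub>\<infinity>i. \<nu> i = \<nu> n)}"
    using assms(1) by (simp add: INFM_iff_infinite)
  then obtain N where "\<forall>n\<in>{n. \<not> (\<exists>\<^sub>\<infinity>i. \<nu> i = \<nu> n)}. n < N"
    unfolding finite_nat_set_iff_bounded by blast
  then show ?thesis
    by (meson mem_Collect_eq not_le)
qed

lemma recurrent_value_of_colour:
  fixes \<nu> :: "nat \<Rightarrow> 'a"
  assumes "finite A" "\<forall>i. \<nu> i \<in> A" "\<exists>\<^sub>\<infinity>i. c (\<nu> i) = m"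
  shows "\<exists>v. c v = m \<and> (\<exists>\<^sub>\<infinity>i. \<nu> i = v)"
proof -
  have "infinite {i. c (\<nu> i) = m}"
    using assms(3) by (simp add: INFM_iff_infinite)
  moreover have "\<nu> ` {i. c (\<nu> i) = m} \<subseteq> A"
    using assms(2) by blast
  then have "finite (\<nu> ` {i. c (\<nu> i) = m})"
    using assms(1) by (rule finite_subset)
  ultimately obtain v where v: "v \<in> \<nu> ` {i. c (\<nu> i) = m}" "infinite (\<nu> -` {v} \<inter> {i. c (\<nu> i) = m})"
    by (blast elim: inf_img_fin_domE')
  have "\<nu> -` {v} \<inter> {i. c (\<nu> i) = m} \<subseteq> {i. \<nu> i = v}"
    by auto
  with v(2) have "\<exists>\<^sub>\<infinity>i. \<nu> i = v"
    unfolding INFM_iff_infinite using infinite_super by blast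
  with v(1) show ?thesis
    by auto
qed

lemma finite_recurrent_colours:
  fixes \<nu> :: "nat \<Rightarrow> 'a"
  assumes "finite A" "\<forall>i. \<nu> i \<in> A"
  shows "finite {m. \<exists>\<^sub>\<infinity>i. c (\<nu> i) = m}"
proof -
  have "{m. \<exists>\<^sub>\<infinity>i. c (\<nu> i) = m} \<subseteq> c ` A"
  proof
    fix m assume "m \<in> {m. \<exists>\<^sub>\<infinity>i. c (\<nu> i) = m}"
    then obtain i where "c (\<nu> i) = m"
      by (auto elim: INFM_E)
    with assms(2) show "m \<in> c ` A" by blast
  qed
  with assms(1) show ?thesis
    using finite_surj by blast
qed

lemma recurrent_max_colour_on_segment:
  fixes \<nu> :: "nat \<Rightarrow> 'a" and c :: "'a \<Rightarrow> nat"
  assumes "finite A" "\<forall>i. \<nu> i \<in> A"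
  shows "\<exists>j k. j < k \<and> \<nu> j = \<nu> k \<and> Max (c ` \<nu> ` {j..<k}) = Max {m. \<exists>\<^sub>\<infinity>i. c (\<nu> i) = m}"
proof -
  define K where "K = {m. \<exists>\<^sub>\<infinity>i. c (\<nu> i) = m}"
  obtain N where recurrent: "\<And>n. N \<le> n \<Longrightarrow> \<exists>\<^sub>\<infinity>i. \<nu> i = \<nu> n"
    using eventually_recurrent[OF assms] by blast
  have colour_in_K: "c (\<nu> n) \<in> K" if "N \<le> n" for n
    unfolding K_def using INFM_mono[OF recurrent[OF that]] by auto
  have "finite K"
    unfolding K_def using assms by (rule finite_recurrent_colours)
  moreover have "K \<noteq> {}"
    using colour_in_K[of N] by auto
  ultimately have max_in_K: "Max K \<in> K" and le_max: "\<And>m. m \<in> K \<Longrightarrow> m \<le> Max K"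
    by simp_all
  then have "\<exists>\<^sub>\<infinity>i. c (\<nu> i) = Max K"
    by (simp add: K_def)
  then obtain v where v: "c v = Max K" "\<exists>\<^sub>\<infinity>i. \<nu> i = v"
    by (blast dest: recurrent_value_of_colour[OF assms(1,2)])
  then obtain j where j: "N \<le> j" "\<nu> j = v"
    unfolding INFM_nat_le by blast
  obtain k where k: "j < k" "\<nu> k = v"
    using v(2) unfolding INFM_nat by blast
  have "Max (c ` \<nu> ` {j..<k}) = Max K"
  proof (rule Max_eqI)
    have "Max K = c (\<nu> j)" "j \<in> {j..<k}"
      using v(1) j(2) k(1) by simp_all
    then show "Max K \<in> c ` \<nu> ` {j..<k}"
      by blast
  next
    fix m assume "m \<in> c ` \<nu> ` {j..<k}"
    with j(1) colour_in_K show "m \<le> Max K"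
      by (auto intro: le_max)
  qed simp
  with j k show ?thesis
    unfolding K_def by (intro exI[of _ j] exI[of _ k]) simp
qed

section \<open>Superpotentials\<close>

definition superpotential :: "('v \<Rightarrow> nat) \<Rightarrow> ('v option \<times> 'v option) set \<Rightarrow> ('v option \<Rightarrow> prof) \<Rightarrow> bool" where
  "superpotential c H W \<longleftrightarrow>
     (\<forall>(x, y) \<in> H. \<exists>a. x = Some a \<and> proper_prof (W x) \<and> proper_prof (W y)
        \<and> pleq (padd (punit (c a)) (W y)) (W x))"

lemma superpotential_walk:
  assumes "superpotential c H W" "walk H xs" "proper_prof (W (last xs))"
  shows "pleq (padd (prof_path c (butlast xs)) (W (last xs))) (W (hd xs))"
  using assms(2,3)
proof (induction xs rule: induct_list012)
  case (3 x y zs)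
  then obtain a where a: "x = Some a" "proper_prof (W x)" "proper_prof (W y)"
      "pleq (padd (punit (c a)) (W y)) (W x)"
    using assms(1) unfolding superpotential_def by auto
  let ?rest = "padd (prof_path c (butlast (y # zs))) (W (last (y # zs)))"
  have "pleq ?rest (W y)"
    using 3 by simp
  then have step: "pleq (padd (punit (c a)) ?rest) (padd (punit (c a)) (W y))"
    by simp
  have "proper_prof ?rest"
    using 3 by (simp add: proper_padd proper_prof_path)
  then have "pleq (padd (punit (c a)) ?rest) (W x)"
    using pleq_trans[OF proper_padd_punit proper_padd_punit[OF a(3)] a(2) step a(4)] by blast
  then show ?case
    using a(1) by (simp add: padd_prof_path_Cons_Some del: prof_path_Cons_Some)
qed simp_all

lemma superpotential_cycle_not_positive:
  assumes "superpotential c H W" "walk H xs" "hd xs = last xs"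
    and "proper_prof (W (last xs))" "W (last xs) \<noteq> PosInf"
  shows "\<not> pless pzero (prof_path c (butlast xs))"
proof
  assume positive: "pless pzero (prof_path c (butlast xs))"
  obtain b where b: "W (last xs) = Fin b"
    using assms(4,5) by (cases "W (last xs)") auto
  obtain p where p: "prof_path c (butlast xs) = Fin p"
    by (simp add: prof_path_def)
  have "pleq (padd (Fin p) (Fin b)) (Fin b)"
    using superpotential_walk[OF assms(1,2,4)] assms(3) b p by simp
  with positive p show False
    using not_pleq_padd_positive by simp
qed

section \<open>Plays under a reasonable strategy\<close>

locale reasonable_strategy =
  fixes V :: "'v set" and E :: "('v \<times> 'v) set" and own :: "'v \<Rightarrow> nat"
    and c :: "'v \<Rightarrow> nat" and \<sigma> :: "('v option \<times> 'v option) set"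
  assumes finite_V: "finite V"
    and E_subset: "E \<subseteq> V \<times> V"
    and successor: "\<forall>v\<in>V. \<exists>w. (v, w) \<in> E"
    and owner: "\<forall>v\<in>V. own v \<in> {0, 1}"
    and strategy: "strategy0 V E own \<sigma>"
    and reasonable: "reasonable V E own c \<sigma>"
begin

abbreviation escV :: "'v option set" where
  "escV \<equiv> insert None (Some ` V)"

abbreviation E\<^sub>\<sigma> :: "('v option \<times> 'v option) set" where
  "E\<^sub>\<sigma> \<equiv> \<sigma> \<union> E1 V E own"

lemma edge_source_in_V: "(x, y) \<in> E\<^sub>\<sigma> \<Longrightarrow> \<exists>a\<in>V. x = Some a \<and> y \<in> escV"
  using strategy E_subset unfolding strategy0_def E0_def E1_def by blast

lemma strategy1_subset: "strategy1 V E own \<tau> \<Longrightarrow> \<sigma> \<union> \<tau> \<subseteq> E\<^sub>\<sigma>"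
  unfolding strategy1_def by auto

lemma strategies_successor:
  assumes "strategy1 V E own \<tau>" "a \<in> V"
  shows "\<exists>y. (Some a, y) \<in> \<sigma> \<union> \<tau>"
proof (cases "own a = 0")
  case True
  then show ?thesis using strategy assms(2) unfolding strategy0_def by blast
next
  case False
  then have "own a = 1" using owner assms(2) by auto
  then show ?thesis using assms unfolding strategy1_def by blast
qed

lemma no_edge_from_None: "G \<subseteq> E\<^sub>\<sigma> \<Longrightarrow> (None, y) \<notin> G"
  using edge_source_in_V by blast

lemma walk_in_escV:
  assumes "G \<subseteq> E\<^sub>\<sigma>" "walk G xs" "hd xs \<in> escV"
  shows "set xs \<subseteq> escV"
  using assms(2,3)
proof (induction xs rule: induct_list012)
  case (3 x y zs)
  then have "(x, y) \<in> E\<^sub>\<sigma>" "walk G (y # zs)"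
    using assms(1) by auto
  then have "set (y # zs) \<subseteq> escV"
    using "3.IH"(2) edge_source_in_V by auto
  with "3.prems"(2) show ?case by simp
qed simp_all

lemma infpath_in_V:
  assumes "G \<subseteq> E\<^sub>\<sigma>" "infpath G \<omega>"
  shows "\<exists>\<nu>. \<omega> = (\<lambda>i. Some (\<nu> i)) \<and> (\<forall>i. \<nu> i \<in> V)"
proof -
  have "\<forall>i. \<exists>a. a \<in> V \<and> \<omega> i = Some a"
    using assms edge_source_in_V unfolding infpath_def by blast
  then obtain \<nu> where "\<forall>i. \<nu> i \<in> V \<and> \<omega> i = Some (\<nu> i)"
    by metis
  then show ?thesis by auto
qed

lemma even_cycle_colour:
  assumes "\<forall>i. (Some (\<nu> i), Some (\<nu> (Suc i))) \<in> E\<^sub>\<sigma>" "j < k" "\<nu> j = \<nu> k"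
  shows "even (Max (c ` \<nu> ` {j..<k}))"
  using reasonable segment_is_cycle[OF assms] unfolding reasonable_def by auto

lemma infpath_wins0:
  assumes "G \<subseteq> E\<^sub>\<sigma>" "infpath G \<omega>"
  shows "wins0 c \<omega>"
proof -
  obtain \<nu> where \<omega>: "\<omega> = (\<lambda>i. Some (\<nu> i))" "\<forall>i. \<nu> i \<in> V"
    using infpath_in_V[OF assms] by blast
  have edges: "\<forall>i. (Some (\<nu> i), Some (\<nu> (Suc i))) \<in> E\<^sub>\<sigma>"
    using assms \<omega>(1) unfolding infpath_def by blast
  obtain j k where jk: "j < k" "\<nu> j = \<nu> k"
    and "Max (c ` \<nu> ` {j..<k}) = Max {m. \<exists>\<^sub>\<infinity>i. c (\<nu> i) = m}"
    using recurrent_max_colour_on_segment[OF finite_V \<omega>(2)] by blast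
  with even_cycle_colour[OF edges jk] show ?thesis
    unfolding wins0_def \<omega>(1) by simp
qed

lemma walk_length_bound:
  assumes "G \<subseteq> E\<^sub>\<sigma>" "walk G xs" "hd xs \<in> escV" "\<nexists>\<omega>. \<omega> 0 = hd xs \<and> infpath G \<omega>"
  shows "length xs \<le> Suc (card V)"
proof (rule ccontr)
  assume "\<not> ?thesis"
  then have "card escV < length xs"
    using finite_V by (simp add: card_image)
  then show False
    using long_walk_infpath[OF assms(2) _ walk_in_escV[OF assms(1-3)]] finite_V assms(4) by blast
qed

lemma play_profs_pmax:
  assumes "strategy1 V E own \<tau>" "s \<in> V"
  defines "S \<equiv> play_profs c (\<sigma> \<union> \<tau>) (Some s)"
  shows "pmax S \<in> S \<and> (\<forall>x\<in>S. pleq x (pmax S)) \<and> proper_prof (pmax S)"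
proof (cases "\<exists>\<omega>. \<omega> 0 = Some s \<and> infpath (\<sigma> \<union> \<tau>) \<omega>")
  case True
  then obtain \<omega> where "\<omega> 0 = Some s" "infpath (\<sigma> \<union> \<tau>) \<omega>"
    by blast
  moreover from this(2) have "wins0 c \<omega>"
    using infpath_wins0 strategy1_subset[OF assms(1)] by blast
  ultimately have "PosInf \<in> S"
    unfolding S_def play_profs_eq by force
  then show ?thesis
    by (simp add: pmax_eq_PosInf)
next
  case False
  let ?W = "{xs. walk (\<sigma> \<union> \<tau>) xs \<and> hd xs = Some s}"
  let ?plays = "{xs \<in> ?W. \<forall>y. (last xs, y) \<notin> \<sigma> \<union> \<tau>}"
  have "?W \<subseteq> {xs. set xs \<subseteq> escV \<and> length xs \<le> Suc (card V)}"
    using walk_length_bound[OF strategy1_subset[OF assms(1)]]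
      walk_in_escV[OF strategy1_subset[OF assms(1)]] False assms(2) by auto
  then have "finite ?W"
    by (rule finite_subset) (simp add: finite_lists_length_le finite_V)
  then have "finite ?plays" "?plays \<noteq> {}"
    using maximal_walk_exists[of "\<sigma> \<union> \<tau>" "Some s"] by (auto elim: rev_finite_subset)
  moreover have S: "S = prof_path c ` ?plays"
    unfolding S_def play_profs_eq using False by auto
  ultimately have "pmax S \<in> S \<and> (\<forall>x\<in>S. pleq x (pmax S))"
    by (intro pmax_greatest) (auto simp: proper_prof_path)
  moreover from this have "proper_prof (pmax S)"
    using S proper_prof_path by auto
  ultimately show ?thesis by blast
qed

definition Fiter :: "nat \<Rightarrow> 'v option \<Rightarrow> prof" where
  "Fiter i = (Fop E own c \<sigma> ^^ i) Vbot"

lemma Fiter_None [simp]: "Fiter i None = pzero"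
  by (cases i) (simp_all add: Fiter_def Vbot_def Fop_def)

lemma Fiter_Suc_player1:
  "own s = 1 \<Longrightarrow>
    Fiter (Suc i) (Some s) = padd (punit (c s)) (pmin ((\<lambda>t. Fiter i (Some t)) ` {t. (s, t) \<in> E}))"
  by (simp add: Fiter_def Fop_def setcompr_eq_image)

lemma Fiter_Suc_player0:
  "own s \<noteq> 1 \<Longrightarrow>
    Fiter (Suc i) (Some s) = padd (punit (c s)) (pmax (Fiter i ` {t. (Some s, t) \<in> \<sigma>}))"
  by (simp add: Fiter_def Fop_def setcompr_eq_image)

lemma E_successors:
  assumes "s \<in> V"
  shows "finite {t. (s, t) \<in> E}" "{t. (s, t) \<in> E} \<noteq> {}" "{t. (s, t) \<in> E} \<subseteq> V"
proof -
  show "{t. (s, t) \<in> E} \<subseteq> V"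
    using E_subset by auto
  then show "finite {t. (s, t) \<in> E}"
    using finite_V by (rule finite_subset)
  show "{t. (s, t) \<in> E} \<noteq> {}"
    using successor assms by auto
qed

lemma \<sigma>_successors:
  assumes "s \<in> V" "own s \<noteq> 1"
  shows "finite {t. (Some s, t) \<in> \<sigma>}" "{t. (Some s, t) \<in> \<sigma>} \<noteq> {}" "{t. (Some s, t) \<in> \<sigma>} \<subseteq> escV"
proof -
  show "{t. (Some s, t) \<in> \<sigma>} \<subseteq> escV"
    using edge_source_in_V by blast
  then show "finite {t. (Some s, t) \<in> \<sigma>}"
    using finite_V by (auto intro: finite_subset[of _ escV])
  show "{t. (Some s, t) \<in> \<sigma>} \<noteq> {}"
    using strategy owner assms unfolding strategy0_def by auto
qed

lemma proper_Fiter: "x \<in> escV \<Longrightarrow> proper_prof (Fiter i x)"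
proof (induction i arbitrary: x)
  case 0
  then show ?case by (auto simp: Fiter_def Vbot_def pzero_def)
next
  case (Suc i)
  show ?case
  proof (cases x)
    case (Some s)
    with Suc.prems have s: "s \<in> V" by auto
    show ?thesis
    proof (cases "own s = 1")
      case True
      have "proper_prof (pmin ((\<lambda>t. Fiter i (Some t)) ` {t. (s, t) \<in> E}))"
        using E_successors[OF s] Suc.IH by (intro proper_pmin) auto
      with Some True show ?thesis
        by (simp add: Fiter_Suc_player1 proper_padd_punit)
    next
      case False
      have "proper_prof (pmax (Fiter i ` {t. (Some s, t) \<in> \<sigma>}))"
        using \<sigma>_successors[OF s False] Suc.IH by (intro proper_pmax) auto
      with Some False show ?thesis
        by (simp add: Fiter_Suc_player0 proper_padd_punit)
    qed
  qed (simp add: pzero_def)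
qed

lemma Fiter_Suc_pleq: "x \<in> escV \<Longrightarrow> pleq (Fiter (Suc i) x) (Fiter i x)"
proof (induction i arbitrary: x)
  case 0
  then show ?case by (cases x) (simp_all add: Fiter_def Vbot_def Fop_def)
next
  case (Suc i)
  show ?case
  proof (cases x)
    case (Some s)
    with Suc.prems have s: "s \<in> V" by auto
    show ?thesis
    proof (cases "own s = 1")
      case True
      have "pleq (pmin ((\<lambda>t. Fiter (Suc i) (Some t)) ` {t. (s, t) \<in> E}))
                 (pmin ((\<lambda>t. Fiter i (Some t)) ` {t. (s, t) \<in> E}))"
        using E_successors[OF s] Suc.IH proper_Fiter by (intro pmin_mono) auto
      with Some True show ?thesis
        by (simp add: Fiter_Suc_player1)
    next
      case False
      have "\<forall>t\<in>{t. (Some s, t) \<in> \<sigma>}. t \<in> escV"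
        using \<sigma>_successors(3)[OF s False] by blast
      then have "pleq (pmax (Fiter (Suc i) ` {t. (Some s, t) \<in> \<sigma>})) (pmax (Fiter i ` {t. (Some s, t) \<in> \<sigma>}))"
        using \<sigma>_successors(1,2)[OF s False] Suc.IH proper_Fiter by (intro pmax_mono) auto
      with Some False show ?thesis
        by (simp add: Fiter_Suc_player0)
    qed
  qed simp
qed

lemma pmin_Fiter_E_successors:
  fixes i :: nat
  assumes "s \<in> V"
  defines "P \<equiv> pmin ((\<lambda>t. Fiter i (Some t)) ` {t. (s, t) \<in> E})"
  shows "\<exists>u. (s, u) \<in> E \<and> P = Fiter i (Some u)" "\<forall>t. (s, t) \<in> E \<longrightarrow> pleq P (Fiter i (Some t))"
proof -
  have "\<forall>x\<in>(\<lambda>t. Fiter i (Some t)) ` {t. (s, t) \<in> E}. proper_prof x"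
    using E_subset proper_Fiter by auto
  then have "P \<in> (\<lambda>t. Fiter i (Some t)) ` {t. (s, t) \<in> E}
      \<and> (\<forall>x\<in>(\<lambda>t. Fiter i (Some t)) ` {t. (s, t) \<in> E}. pleq P x)"
    unfolding P_def using E_successors[OF assms(1)] by (intro pmin_least) auto
  then show "\<exists>u. (s, u) \<in> E \<and> P = Fiter i (Some u)" "\<forall>t. (s, t) \<in> E \<longrightarrow> pleq P (Fiter i (Some t))"
    by auto
qed

lemma pmax_Fiter_\<sigma>_successors:
  fixes i :: nat
  assumes "s \<in> V" "own s \<noteq> 1"
  defines "P \<equiv> pmax (Fiter i ` {t. (Some s, t) \<in> \<sigma>})"
  shows "\<exists>t. (Some s, t) \<in> \<sigma> \<and> P = Fiter i t" "\<forall>t. (Some s, t) \<in> \<sigma> \<longrightarrow> pleq (Fiter i t) P"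
    and "proper_prof P"
proof -
  have "\<forall>x\<in>Fiter i ` {t. (Some s, t) \<in> \<sigma>}. proper_prof x"
    using \<sigma>_successors(3)[OF assms(1,2)] proper_Fiter by blast
  then have "P \<in> Fiter i ` {t. (Some s, t) \<in> \<sigma>} \<and> (\<forall>x\<in>Fiter i ` {t. (Some s, t) \<in> \<sigma>}. pleq x P)"
    unfolding P_def using \<sigma>_successors(1,2)[OF assms(1,2)] by (intro pmax_greatest) auto
  with \<open>\<forall>x\<in>_. proper_prof x\<close> show "\<exists>t. (Some s, t) \<in> \<sigma> \<and> P = Fiter i t"
    "\<forall>t. (Some s, t) \<in> \<sigma> \<longrightarrow> pleq (Fiter i t) P" and "proper_prof P"
    by auto
qed

lemma Fiter_Suc_pleq_successor:
  assumes "strategy1 V E own \<tau>" "s \<in> V"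
  shows "\<exists>t. (Some s, t) \<in> \<sigma> \<union> \<tau> \<and> pleq (Fiter (Suc i) (Some s)) (padd (punit (c s)) (Fiter i t))"
proof (cases "own s = 1")
  case True
  then obtain u where u: "(Some s, Some u) \<in> \<tau>" "(s, u) \<in> E"
    using assms unfolding strategy1_def E1_def by blast
  with True show ?thesis
    using pmin_Fiter_E_successors(2)[OF assms(2)] by (auto simp: Fiter_Suc_player1)
next
  case False
  then obtain t where "(Some s, t) \<in> \<sigma>" "pmax (Fiter i ` {t. (Some s, t) \<in> \<sigma>}) = Fiter i t"
    using pmax_Fiter_\<sigma>_successors(1)[OF assms(2)] by blast
  with False show ?thesis
    by (auto simp: Fiter_Suc_player0)
qed

lemma long_walk_or_play_above_Fiter:
  assumes "strategy1 V E own \<tau>" "s \<in> V"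
  shows "(\<exists>xs. walk (\<sigma> \<union> \<tau>) xs \<and> hd xs = Some s \<and> length xs = Suc i \<and> set xs \<subseteq> Some ` V)
    \<or> (\<exists>xs. walk (\<sigma> \<union> \<tau>) xs \<and> hd xs = Some s \<and> (\<forall>y. (last xs, y) \<notin> \<sigma> \<union> \<tau>)
          \<and> pleq (Fiter i (Some s)) (prof_path c xs))"
  using assms(2)
proof (induction i arbitrary: s)
  case 0
  then show ?case
    by (intro disjI1 exI[of _ "[Some s]"]) simp
next
  case (Suc i)
  obtain t where t: "(Some s, t) \<in> \<sigma> \<union> \<tau>"
    and bound: "pleq (Fiter (Suc i) (Some s)) (padd (punit (c s)) (Fiter i t))"
    using Fiter_Suc_pleq_successor[OF assms(1) Suc.prems] by blast
  have "t \<in> escV"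
    using t strategy1_subset[OF assms(1)] edge_source_in_V by blast
  show ?case
  proof (cases t)
    case None
    with t bound no_edge_from_None[OF strategy1_subset[OF assms(1)]] show ?thesis
      by (intro disjI2 exI[of _ "[Some s, None]"]) (simp add: pzero_def punit_def)
  next
    case (Some u)
    with \<open>t \<in> escV\<close> have u: "u \<in> V" by auto
    from Suc.IH[OF u] show ?thesis
    proof (elim disjE exE conjE)
      fix xs assume xs: "walk (\<sigma> \<union> \<tau>) xs" "hd xs = Some u" "length xs = Suc i" "set xs \<subseteq> Some ` V"
      with t Some Suc.prems show ?thesis
        by (intro disjI1 exI[of _ "Some s # xs"]) (auto intro: walk_Cons)
    next
      fix xs assume xs: "walk (\<sigma> \<union> \<tau>) xs" "hd xs = Some u" "\<forall>y. (last xs, y) \<notin> \<sigma> \<union> \<tau>"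
        "pleq (Fiter i (Some u)) (prof_path c xs)"
      have "pleq (padd (punit (c s)) (Fiter i t)) (prof_path c (Some s # xs))"
        using xs(4) Some by simp
      moreover have "Some s \<in> escV"
        using Suc.prems by simp
      ultimately have "pleq (Fiter (Suc i) (Some s)) (prof_path c (Some s # xs))"
        using pleq_trans[OF proper_Fiter proper_padd_punit[OF proper_Fiter[OF \<open>t \<in> escV\<close>]]
            proper_prof_path bound] by blast
      with xs t Some show ?thesis
        by (intro disjI2 exI[of _ "Some s # xs"]) (auto intro: walk_Cons)
    qed
  qed
qed

lemma Fiter_pleq_play_pmax:
  assumes "strategy1 V E own \<tau>" "s \<in> V" "card V \<le> i"
  shows "pleq (Fiter i (Some s)) (pmax (play_profs c (\<sigma> \<union> \<tau>) (Some s)))"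
  using long_walk_or_play_above_Fiter[OF assms(1,2), of i]
proof (elim disjE exE conjE)
  fix xs assume xs: "walk (\<sigma> \<union> \<tau>) xs" "hd xs = Some s" "length xs = Suc i" "set xs \<subseteq> Some ` V"
  have "card (Some ` V) < length xs"
    using xs(3) assms(3) card_image_le[OF finite_V, of Some] by simp
  then obtain \<omega> where "\<omega> 0 = Some s" "infpath (\<sigma> \<union> \<tau>) \<omega>"
    using long_walk_infpath[OF xs(1) _ xs(4)] finite_V xs(2) by auto
  moreover from this(2) have "wins0 c \<omega>"
    using infpath_wins0 strategy1_subset[OF assms(1)] by blast
  ultimately have "PosInf \<in> play_profs c (\<sigma> \<union> \<tau>) (Some s)"
    unfolding play_profs_eq by force
  then show ?thesis
    by (simp add: pmax_eq_PosInf)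
next
  fix xs assume xs: "walk (\<sigma> \<union> \<tau>) xs" "hd xs = Some s" "\<forall>y. (last xs, y) \<notin> \<sigma> \<union> \<tau>"
    "pleq (Fiter i (Some s)) (prof_path c xs)"
  then have "prof_path c xs \<in> play_profs c (\<sigma> \<union> \<tau>) (Some s)"
    unfolding play_profs_eq by blast
  then have "pleq (prof_path c xs) (pmax (play_profs c (\<sigma> \<union> \<tau>) (Some s)))"
    using play_profs_pmax[OF assms(1,2)] by blast
  then show ?thesis
    using pleq_trans[OF proper_Fiter proper_prof_path _ xs(4)] play_profs_pmax[OF assms(1,2)] assms(2)
    by simp
qed

subsection \<open>The best reply of player 1\<close>

definition best_succ :: "nat \<Rightarrow> 'v \<Rightarrow> 'v" where
  "best_succ j a =
     (SOME u. (a, u) \<in> E \<and> pmin ((\<lambda>t. Fiter j (Some t)) ` {t. (a, t) \<in> E}) = Fiter j (Some u))"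

definition best_reply :: "nat \<Rightarrow> ('v option \<times> 'v option) set" where
  "best_reply j = {(Some a, Some (best_succ j a)) | a. a \<in> V \<and> own a = 1}"

lemma best_succ:
  "a \<in> V \<Longrightarrow>
    (a, best_succ j a) \<in> E \<and> pmin ((\<lambda>t. Fiter j (Some t)) ` {t. (a, t) \<in> E}) = Fiter j (Some (best_succ j a))"
  unfolding best_succ_def by (rule someI_ex) (rule pmin_Fiter_E_successors(1))

lemma strategy1_best_reply: "strategy1 V E own (best_reply j)"
  using best_succ unfolding strategy1_def best_reply_def E1_def by blast

lemma superpotential_best_reply: "superpotential c (\<sigma> \<union> best_reply j) (Fiter (Suc j))"
  unfolding superpotential_def
proof (intro ballI, clarify)
  fix x y assume "(x, y) \<in> \<sigma> \<union> best_reply j"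
  then consider (player0) a where "(Some a, y) \<in> \<sigma>" "x = Some a" "a \<in> V" "own a \<noteq> 1" "y \<in> escV"
    | (player1) a where "x = Some a" "y = Some (best_succ j a)" "a \<in> V" "own a = 1"
    using strategy E_subset unfolding best_reply_def strategy0_def E0_def by fastforce
  then show "\<exists>a. x = Some a \<and> proper_prof (Fiter (Suc j) x) \<and> proper_prof (Fiter (Suc j) y)
      \<and> pleq (padd (punit (c a)) (Fiter (Suc j) y)) (Fiter (Suc j) x)"
  proof cases
    case player0
    let ?P = "pmax (Fiter j ` {t. (Some a, t) \<in> \<sigma>})"
    have "pleq (Fiter (Suc j) y) (Fiter j y)" "pleq (Fiter j y) ?P"
      using Fiter_Suc_pleq[OF player0(5)] pmax_Fiter_\<sigma>_successors(2)[OF player0(3,4)] player0(1) by auto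
    then have "pleq (Fiter (Suc j) y) ?P"
      using pleq_trans[OF proper_Fiter[OF player0(5)] proper_Fiter[OF player0(5)]
          pmax_Fiter_\<sigma>_successors(3)[OF player0(3,4)]] by blast
    then show ?thesis
      using player0 proper_Fiter pmax_Fiter_\<sigma>_successors(3)[OF player0(3,4)]
      by (simp add: Fiter_Suc_player0 proper_padd_punit)
  next
    case player1
    have "y \<in> escV"
      using best_succ[OF player1(3)] E_subset player1(2) by auto
    then show ?thesis
      using player1 best_succ[OF player1(3)] Fiter_Suc_pleq proper_Fiter
      by (simp add: Fiter_Suc_player1 proper_padd_punit)
  qed
qed

lemma superpotential_infpath_PosInf:
  assumes "superpotential c H W" "H \<subseteq> E\<^sub>\<sigma>" "infpath H \<omega>"
  shows "W (\<omega> 0) = PosInf"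
proof (rule ccontr)
  assume start: "W (\<omega> 0) \<noteq> PosInf"
  obtain \<nu> where \<omega>: "\<omega> = (\<lambda>i. Some (\<nu> i))" "\<forall>i. \<nu> i \<in> V"
    using infpath_in_V[OF assms(2,3)] by blast
  obtain j k where jk: "j < k" "\<nu> j = \<nu> k"
    using infinite_sequence_repeats[OF finite_V \<omega>(2)] by blast
  have proper: "proper_prof (W (\<omega> i))" for i
    using assms(1,3) unfolding superpotential_def infpath_def by fastforce
  have "pleq (padd (prof_path c (map \<omega> [0..<j])) (W (\<omega> j))) (W (\<omega> 0))"
    using superpotential_walk[OF assms(1) walk_map_upt[OF assms(3), of 0 "Suc j"]] proper[of j]
    by (simp add: map_upt_Suc_ends del: upt_Suc)
  with start have "W (\<omega> j) \<noteq> PosInf"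
    by (cases "W (\<omega> j)") simp_all
  then have "\<not> pless pzero (prof_path c (map \<omega> [j..<k]))"
    using superpotential_cycle_not_positive[OF assms(1) walk_map_upt[OF assms(3), of j "Suc k"]] proper[of j]
      jk \<omega>(1) by (simp add: map_upt_Suc_ends del: upt_Suc)
  moreover have "even (Max (c ` \<nu> ` {j..<k}))"
    using assms(2,3) jk by (intro even_cycle_colour) (auto simp: infpath_def \<omega>(1))
  then have "pless pzero (prof_path c (map Some (map \<nu> [j..<k])))"
    using jk(1) by (intro pzero_pless_even_cycle) simp_all
  ultimately show False
    by (simp add: \<omega>(1) comp_def)
qed

lemma play_pmax_best_reply_pleq:
  assumes "s \<in> V"
  shows "pleq (pmax (play_profs c (\<sigma> \<union> best_reply j) (Some s))) (Fiter (Suc j) (Some s))"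
proof (cases "Fiter (Suc j) (Some s) = PosInf")
  case False
  let ?H = "\<sigma> \<union> best_reply j"
  have H: "?H \<subseteq> E\<^sub>\<sigma>"
    by (rule strategy1_subset[OF strategy1_best_reply])
  have "\<nexists>\<omega>. \<omega> 0 = Some s \<and> infpath ?H \<omega>"
    using superpotential_infpath_PosInf[OF superpotential_best_reply H] False by metis
  then obtain xs where xs: "pmax (play_profs c ?H (Some s)) = prof_path c xs" "walk ?H xs"
    "hd xs = Some s" "\<forall>y. (last xs, y) \<notin> ?H"
    using play_profs_pmax[OF strategy1_best_reply assms] unfolding play_profs_eq by blast
  have "xs \<noteq> []"
    using xs(2) by auto
  then have "last xs \<in> escV"
    using walk_in_escV[OF H xs(2)] xs(3) assms last_in_set by auto
  moreover have "last xs \<notin> Some ` V"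
  proof
    assume "last xs \<in> Some ` V"
    then obtain v where "v \<in> V" "last xs = Some v" by blast
    with xs(4) show False
      using strategies_successor[OF strategy1_best_reply, of v j] by auto
  qed
  ultimately have "last xs = None" by blast
  with \<open>xs \<noteq> []\<close> have "xs = butlast xs @ [None]"
    using append_butlast_last_id[of xs] by simp
  then have "prof_path c xs = padd (prof_path c (butlast xs)) (Fiter (Suc j) (last xs))"
    using \<open>last xs = None\<close> by (metis Fiter_None padd_prof_path_pzero prof_path_snoc_None)
  also have "pleq \<dots> (Fiter (Suc j) (Some s))"
    using superpotential_walk[OF superpotential_best_reply xs(2)] \<open>last xs = None\<close> xs(3)
    by (simp add: pzero_def)
  finally show ?thesis
    using xs(1) by simp
qed simp

lemma finite_strategies1: "finite {\<tau>. strategy1 V E own \<tau>}"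
proof -
  have "E1 V E own \<subseteq> (\<lambda>(a, b). (Some a, Some b)) ` E"
    unfolding E1_def by auto
  moreover have "finite E"
    using finite_subset[OF E_subset] finite_V by blast
  ultimately have "finite (E1 V E own)"
    using finite_surj by blast
  then show ?thesis
    unfolding strategy1_def by (auto intro: finite_subset[of _ "Pow (E1 V E own)"])
qed

lemma Fiter_eq_valuation:
  assumes "card V \<le> i" "s \<in> V"
  shows "Fiter i (Some s) = valuation V E own c \<sigma> (Some s)"
proof -
  define M where "M \<tau> = pmax (play_profs c (\<sigma> \<union> \<tau>) (Some s))" for \<tau>
  let ?T = "M ` {\<tau>. strategy1 V E own \<tau>}"
  obtain j where i: "i = Suc j"
    using assms finite_V by (cases i) (auto simp: card_gt_0_iff)
  have proper_M: "proper_prof (M \<tau>)" if "strategy1 V E own \<tau>" for \<tau>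
    using play_profs_pmax[OF that assms(2)] by (simp add: M_def)
  have "pmin ?T \<in> ?T \<and> (\<forall>x\<in>?T. pleq (pmin ?T) x)"
    using finite_strategies1 strategy1_best_reply proper_M by (intro pmin_least) auto
  then obtain \<tau> where \<tau>: "strategy1 V E own \<tau>" "pmin ?T = M \<tau>"
    and least: "pleq (pmin ?T) (M (best_reply j))"
    using strategy1_best_reply by blast
  have "pleq (Fiter i (Some s)) (pmin ?T)"
    using Fiter_pleq_play_pmax[OF \<tau>(1) assms(2,1)] \<tau>(2) by (simp add: M_def)
  moreover have "pleq (pmin ?T) (Fiter i (Some s))"
    using pleq_trans[OF proper_M[OF \<tau>(1)] proper_M[OF strategy1_best_reply] proper_Fiter]
      \<tau>(2) least play_pmax_best_reply_pleq[OF assms(2)] assms(2) i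
    by (simp add: M_def)
  ultimately have "Fiter i (Some s) = pmin ?T"
    by (rule pleq_antisym)
  then show ?thesis
    by (simp add: valuation_def M_def setcompr_eq_image)
qed

end

theorem mainTheorem7:
  fixes V :: "'v set" and E :: "('v \<times> 'v) set" and own :: "'v \<Rightarrow> nat"
    and c :: "'v \<Rightarrow> nat" and d :: nat and \<sigma> :: "('v option \<times> 'v option) set"
  assumes "finite V"
    and "E \<subseteq> V \<times> V"
    and "\<forall>v\<in>V. \<exists>w. (v, w) \<in> E"
    and "\<forall>v\<in>V. own v \<in> {0, 1}"
    and "\<forall>v\<in>V. c v < d"
    and "strategy0 V E own \<sigma>"
    and "reasonable V E own c \<sigma>"
  shows "\<forall>i \<ge> card V. \<forall>x \<in> insert None (Some ` V).
           ((Fop E own c \<sigma>) ^^ i) Vbot x = valuation V E own c \<sigma> x"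
proof -
  \<comment> \<open>The colour bound \<open>d\<close> is not needed: profiles are indexed by all of \<open>nat\<close>.\<close>
  interpret reasonable_strategy V E own c \<sigma>
    using assms(1-4,6,7) by unfold_locales
  have "Fiter i x = valuation V E own c \<sigma> x" if "card V \<le> i" "x \<in> escV" for i x
    using that Fiter_eq_valuation by (cases x) (auto simp: valuation_def)
  then show ?thesis
    unfolding Fiter_def by blast
qed

end
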